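(* Let the observer be at $(1,0,0)$ and let $r=1$. For $\ell\ge 1$ let $R_\ell$ be the rectangle in the plane $x=0$ with vertices $(0,y_i,z_j)$, $i,j\in\{1,2\}$, where $$y_{1,2}=\frac{r}{\sqrt2}\mp\frac{\ell}{2},\qquad z_{1,2}=\frac{r}{\sqrt2}\mp\frac{1}{2\ell},$$ i.e. the rectangle of area $1$, sides $\ell$ (parallel to the $y$-axis) and $1/\ell$ (parallel to the $z$-axis), centered at $(0,r/\sqrt2,r/\sqrt2)$. Let $\Omega(\ell)$ be the solid angle subtended by $R_\ell$ at the observer. Then the maximum of $\Omega(\ell)$ over $\ell\ge1$ is attained at $\ell=1$ (the square).
   Context: The solid angle subtended at a point $P$ by a planar region $S$ is the area of the radial projection of $S$ onto the unit sphere centered at $P$. For an observer at $(x_0,0,0)$ with $x_0>0$ and the rectangle above, it equals $F(y_2,z_2)-F(y_1,z_2)-F(y_2,z_1)+F(y_1,z_1)$ where $F(y,z)=\arctan\!\big(yz/(x_0\sqrt{x_0^2+y^2+z^2})\big)$. *)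

theory Defs
  imports "HOL-Analysis.Analysis"
begin

text \<open>Antiderivative from the context: observer at (x0,0,0), x0 > 0.\<close>
definition sa_F :: "real \<Rightarrow> real \<Rightarrow> real \<Rightarrow> real" where
  "sa_F x0 y z = arctan (y * z / (x0 * sqrt (x0\<^sup>2 + y\<^sup>2 + z\<^sup>2)))"

text \<open>Solid angle subtended at (x0,0,0) by the rectangle
  {0} x [y1,y2] x [z1,z2] in the plane x = 0 (formula given in the context).\<close>
definition solid_angle_rect :: "real \<Rightarrow> real \<Rightarrow> real \<Rightarrow> real \<Rightarrow> real \<Rightarrow> real" where
  "solid_angle_rect x0 y1 y2 z1 z2 =
     sa_F x0 y2 z2 - sa_F x0 y1 z2 - sa_F x0 y2 z1 + sa_F x0 y1 z1"

definition Omega :: "real \<Rightarrow> real" where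
  "Omega l = (let r = (1::real) in
     solid_angle_rect 1 (r / sqrt 2 - l / 2) (r / sqrt 2 + l / 2)
                        (r / sqrt 2 - 1 / (2 * l)) (r / sqrt 2 + 1 / (2 * l)))"

end

(* Scaling all lengths by sqrt 2 gives Omega l = Phi (l / sqrt 2), where Phi T is the sum of
   e d sa_H (1 + e T) (1 + d / (2 T)) over e, d in {-1, 1}; so it suffices that Phi' <= 0 on
   [1 / sqrt 2, oo). Differentiating, Phi' T / sqrt 2 is the sum of K / (A B sqrt P) over the four
   sign pairs, for explicit polynomials A, B, P, K in T, and K factors as (2 T^2 - e d) q. The factor
   2 T^2 - 1 of the two terms with e d = 1 vanishes exactly at the square and is nonnegative beyond.

   In each of the two pairs of terms (e d = 1 and e d = -1) one member is negative, and the pair is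
   nonpositive once that member dominates in square, which is a polynomial inequality. It always holds
   for e d = 1, and for e d = -1 whenever a certain polynomial N is negative. Otherwise the e d = -1
   pair is bounded through x + y = (y^2 - x^2) / (y - x) and the AM-GM bounds
   2 k c / (k^2 P + c^2) <= 1 / sqrt P <= (k^2 P + c^2) / (2 k c P) with quadratics c close to
   20 sqrt P, and clearing denominators leaves the sign of explicit integer polynomials. Such signs on
   [a / m, oo) are certified by the coefficients of m^deg p ((a + y) / m) in y being nonnegative
   with positive constant term, a finite computation on integer lists. *)

theory Submission
  imports Defs
begin

section \<open>Integer polynomials as coefficient lists\<close>

fun ipoly :: "int list \<Rightarrow> real \<Rightarrow> real" where
  "ipoly [] x = 0"
| "ipoly (a # p) x = of_int a + x * ipoly p x"

fun ipoly_add :: "int list \<Rightarrow> int list \<Rightarrow> int list" (infixl \<open>\<oplus>\<close> 65) where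
  "[] \<oplus> q = q"
| "p \<oplus> [] = p"
| "(a # p) \<oplus> (b # q) = (a + b) # (p \<oplus> q)"

fun ipoly_mult :: "int list \<Rightarrow> int list \<Rightarrow> int list" (infixl \<open>\<otimes>\<close> 70) where
  "[] \<otimes> q = []"
| "(a # p) \<otimes> q = map ((*) a) q \<oplus> (0 # p \<otimes> q)"

fun ipoly_pcompose :: "int list \<Rightarrow> int list \<Rightarrow> int list" where
  "ipoly_pcompose [] q = []"
| "ipoly_pcompose (a # p) q = [a] \<oplus> q \<otimes> ipoly_pcompose p q"

fun ipoly_dilate :: "int \<Rightarrow> int list \<Rightarrow> int list" where
  "ipoly_dilate m [] = []"
| "ipoly_dilate m (a # p) = a * m ^ length p # ipoly_dilate m p"

fun pos_coeffs :: "int list \<Rightarrow> bool" where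
  "pos_coeffs [] = False"
| "pos_coeffs (a # p) \<longleftrightarrow> 0 < a \<and> list_all (\<lambda>b. 0 \<le> b) p"

lemma ipoly_add [simp]: "ipoly (p \<oplus> q) x = ipoly p x + ipoly q x"
  by (induction p q rule: ipoly_add.induct) (simp_all add: algebra_simps)

lemma ipoly_map_mult [simp]: "ipoly (map ((*) c) p) x = of_int c * ipoly p x"
  by (induction p) (simp_all add: algebra_simps)

lemma ipoly_mult [simp]: "ipoly (p \<otimes> q) x = ipoly p x * ipoly q x"
  by (induction p) (simp_all add: ipoly_map_mult algebra_simps)

lemma ipoly_pcompose [simp]: "ipoly (ipoly_pcompose p q) x = ipoly p (ipoly q x)"
  by (induction p) simp_all

lemma ipoly_dilate:
  assumes "m \<noteq> 0"
  shows "of_int m * ipoly (ipoly_dilate m p) x = of_int m ^ length p * ipoly p (x / of_int m)"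
  using assms by (induction p) (simp_all add: field_simps)

lemma ipoly_nonneg: "list_all (\<lambda>b. 0 \<le> b) p \<Longrightarrow> 0 \<le> x \<Longrightarrow> 0 \<le> ipoly p x"
  by (induction p) auto

lemma ipoly_eq_zero: "list_all ((=) 0) p \<Longrightarrow> ipoly p x = 0"
  by (induction p) auto

lemma ipoly_pos: "pos_coeffs p \<Longrightarrow> 0 \<le> x \<Longrightarrow> 0 < ipoly p x"
  by (cases p) (auto intro!: add_pos_nonneg mult_nonneg_nonneg ipoly_nonneg)

lemma ipoly_pos_beyond:
  assumes "pos_coeffs (ipoly_pcompose (ipoly_dilate m p) [n, 1])" "0 < m" "of_int n / of_int m \<le> x"
  shows "0 < ipoly p x"
proof -
  have m: "(0::real) < of_int m" using assms(2) by simp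
  define y where "y = of_int m * x - of_int n"
  have "0 \<le> y" using assms(3) m by (simp add: y_def field_simps)
  then have "0 < of_int m * ipoly (ipoly_dilate m p) (of_int n + y)"
    using ipoly_pos[OF assms(1)] m by simp
  then have "0 < of_int m ^ length p * ipoly p x"
    using ipoly_dilate[of m p "of_int n + y"] m assms(2) by (simp add: y_def)
  then show ?thesis using m by (simp add: zero_less_mult_iff)
qed

lemma ipoly_neg_beyond:
  assumes "pos_coeffs (ipoly_pcompose (ipoly_dilate m ([-1] \<otimes> p)) [n, 1])" "0 < m" "of_int n / of_int m \<le> x"
  shows "ipoly p x < 0"
  using ipoly_pos_beyond[OF assms] by simp

section \<open>The solid angle as a function of the scaled side length\<close>

definition sa_H :: "real \<Rightarrow> real \<Rightarrow> real" where
  "sa_H y z = arctan (y * z / 2 / sqrt (1 + (y\<^sup>2 + z\<^sup>2) / 2))"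

definition Phi :: "real \<Rightarrow> real" where
  "Phi T = (\<Sum>e\<in>{-1, 1}. \<Sum>d\<in>{-1, 1}. e * d * sa_H (1 + e * T) (1 + d / (2 * T)))"

lemma sa_F_scaled: "sa_F 1 (y / sqrt 2) (z / sqrt 2) = sa_H y z"
proof -
  have "y / sqrt 2 * (z / sqrt 2) = y * z / 2"
    by (simp add: field_simps)
  moreover have "1 * sqrt (1\<^sup>2 + (y / sqrt 2)\<^sup>2 + (z / sqrt 2)\<^sup>2) = sqrt (1 + (y\<^sup>2 + z\<^sup>2) / 2)"
    by (simp add: power_divide add_divide_distrib)
  ultimately show ?thesis
    unfolding sa_F_def sa_H_def by (simp only: divide_divide_eq_left)
qed

lemma Omega_eq_Phi:
  assumes "0 < l"
  shows "Omega l = Phi (l / sqrt 2)"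
proof -
  have scaled: "1 / sqrt 2 - l / 2 = (1 - l / sqrt 2) / sqrt 2"
    "1 / sqrt 2 + l / 2 = (1 + l / sqrt 2) / sqrt 2"
    "1 / sqrt 2 - 1 / (2 * l) = (1 - 1 / (2 * (l / sqrt 2))) / sqrt 2"
    "1 / sqrt 2 + 1 / (2 * l) = (1 + 1 / (2 * (l / sqrt 2))) / sqrt 2"
    using assms by (simp_all add: field_simps)
  show ?thesis
    unfolding Omega_def Let_def solid_angle_rect_def scaled sa_F_scaled Phi_def by simp
qed

lemma sa_H_deriv:
  assumes "(y has_real_derivative y') (at t)" "(z has_real_derivative z') (at t)"
  shows "((\<lambda>t. sa_H (y t) (z t)) has_real_derivative
     (y' * z t * (2 + (z t)\<^sup>2) + y t * z' * (2 + (y t)\<^sup>2)) /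
       (sqrt (1 + ((y t)\<^sup>2 + (z t)\<^sup>2) / 2) * (2 + (y t)\<^sup>2) * (2 + (z t)\<^sup>2))) (at t)"
proof -
  define Y Z where "Y = y t" and "Z = z t"
  define s where "s = sqrt (1 + (Y\<^sup>2 + Z\<^sup>2) / 2)"
  have q: "0 < 1 + (Y\<^sup>2 + Z\<^sup>2) / 2" by (simp add: add_pos_nonneg)
  then have s: "0 < s" "s\<^sup>2 = 1 + (Y\<^sup>2 + Z\<^sup>2) / 2" unfolding s_def by simp_all
  have ds: "((\<lambda>t. sqrt (1 + ((y t)\<^sup>2 + (z t)\<^sup>2) / 2)) has_real_derivative (Y * y' + Z * z') / (2 * s)) (at t)"
    using q s(1) unfolding s_def Y_def Z_def
    by (auto intro!: derivative_eq_intros assms simp: field_simps)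
  have dn: "((\<lambda>t. y t * z t / 2) has_real_derivative (y' * Z + Y * z') / 2) (at t)"
    unfolding Y_def Z_def by (auto intro!: derivative_eq_intros assms)
  have dH: "((\<lambda>t. sa_H (y t) (z t)) has_real_derivative
      inverse (1 + (Y * Z / 2 / s)\<^sup>2) * (((y' * Z + Y * z') / 2 * s - Y * Z / 2 * ((Y * y' + Z * z') / (2 * s))) / s\<^sup>2)) (at t)"
    using DERIV_chain2[OF DERIV_arctan DERIV_divide[OF dn ds]] s(1)
    unfolding sa_H_def Y_def Z_def s_def by (simp add: power2_eq_square)
  have "inverse (1 + (Y * Z / 2 / s)\<^sup>2) * (((y' * Z + Y * z') / 2 * s - Y * Z / 2 * ((Y * y' + Z * z') / (2 * s))) / s\<^sup>2)
      = (y' * Z * (2 + Z\<^sup>2) + Y * z' * (2 + Y\<^sup>2)) / (s * (2 + Y\<^sup>2) * (2 + Z\<^sup>2))"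
  proof -
    have A: "0 < 2 + Y\<^sup>2" "0 < 2 + Z\<^sup>2" by (simp_all add: add_pos_nonneg)
    have h1: "1 + (Y * Z / 2 / s)\<^sup>2 = (2 + Y\<^sup>2) * (2 + Z\<^sup>2) / (4 * s\<^sup>2)"
      using s by (simp add: field_simps power2_eq_square)
    have h2: "(y' * Z + Y * z') / 2 * s - Y * Z / 2 * ((Y * y' + Z * z') / (2 * s))
        = ((y' * Z + Y * z') * s\<^sup>2 - Y * Z * (Y * y' + Z * z') / 2) / (2 * s)"
      using s by (simp add: field_simps power2_eq_square)
    have h3: "(y' * Z + Y * z') * s\<^sup>2 - Y * Z * (Y * y' + Z * z') / 2
        = (y' * Z * (2 + Z\<^sup>2) + Y * z' * (2 + Y\<^sup>2)) / 2"
      unfolding s by (simp add: algebra_simps power2_eq_square)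
    have gen: "inverse (a * b / (4 * S)) * (N / 2 / (2 * s) / S) = N / (s * a * b)"
      if "0 < a" "0 < b" "0 < S" for a b S N
      using that s(1) by (simp add: field_simps)
    show ?thesis
      unfolding h1 h2 h3 by (rule gen) (use A s(1) in simp_all)
  qed
  with dH show ?thesis unfolding Y_def Z_def s_def by simp
qed

(* For y = 1 + e T and z = 1 + d / (2 T): 2 + y^2 = den_A e T, 2 + z^2 = den_B d T / (4 T^2)
   and 1 + (y^2 + z^2) / 2 = rad_P e d T / (8 T^2). *)
definition den_A :: "real \<Rightarrow> real \<Rightarrow> real" where
  "den_A e T = 2 + (1 + e * T)\<^sup>2"

definition den_B :: "real \<Rightarrow> real \<Rightarrow> real" where
  "den_B d T = 8 * T\<^sup>2 + (2 * T + d)\<^sup>2"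

definition rad_P :: "real \<Rightarrow> real \<Rightarrow> real \<Rightarrow> real" where
  "rad_P e d T = 4 * T\<^sup>2 * den_A e T + (2 * T + d)\<^sup>2"

definition num_K :: "real \<Rightarrow> real \<Rightarrow> real \<Rightarrow> real" where
  "num_K e d T = d * (2 * T + d) * den_B d T - 4 * e * T * (1 + e * T) * den_A e T"

lemma den_A_pos: "0 < den_A e T"
  by (simp add: den_A_def add_pos_nonneg)

lemma den_B_pos: "0 < T \<Longrightarrow> 0 < den_B d T"
  by (simp add: den_B_def add_pos_nonneg)

lemma rad_P_pos: "0 < T \<Longrightarrow> 0 < rad_P e d T"
  by (simp add: rad_P_def den_A_pos add_pos_nonneg)

lemma sa_H_term_deriv:
  assumes T: "0 < T" and e: "e\<^sup>2 = 1" and d: "d\<^sup>2 = 1"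
  shows "((\<lambda>T. e * d * sa_H (1 + e * T) (1 + d / (2 * T))) has_real_derivative
           sqrt 2 * num_K e d T / (den_A e T * den_B d T * sqrt (rad_P e d T))) (at T)"
proof -
  define y z where "y = 1 + e * T" and "z = 1 + d / (2 * T)"
  have dz: "((\<lambda>T. 1 + d / (2 * T)) has_real_derivative - d / (2 * T\<^sup>2)) (at T)"
    using T by (auto intro!: derivative_eq_intros simp: power2_eq_square)
  have dy: "((\<lambda>T. 1 + e * T) has_real_derivative e) (at T)"
    by (auto intro!: derivative_eq_intros)
  have Ay: "2 + y\<^sup>2 = den_A e T"
    by (simp add: y_def den_A_def)
  have Bz: "2 + z\<^sup>2 = den_B d T / (4 * T\<^sup>2)"
    using T by (simp add: z_def den_B_def field_simps power2_eq_square)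
  have "1 + (y\<^sup>2 + z\<^sup>2) / 2 = rad_P e d T / (8 * T\<^sup>2)"
    using T by (simp add: y_def z_def rad_P_def den_A_def field_simps power2_eq_square)
  moreover have "sqrt 8 = 2 * sqrt (2::real)"
    using real_sqrt_mult[of 4 2] by simp
  ultimately have sq: "sqrt (1 + (y\<^sup>2 + z\<^sup>2) / 2) = sqrt (rad_P e d T) / (2 * sqrt 2 * T)"
    using T by (simp add: real_sqrt_divide real_sqrt_mult)
  have pos: "0 < den_A e T" "0 < den_B d T" "0 < sqrt (rad_P e d T)"
    using T den_A_pos den_B_pos rad_P_pos by auto
  have ee: "e * e = 1" and dd: "d * d = 1"
    using e d by (simp_all add: power2_eq_square)
  have "e * d * ((e * z * (2 + z\<^sup>2) + y * (- d / (2 * T\<^sup>2)) * (2 + y\<^sup>2)) /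
          (sqrt (1 + (y\<^sup>2 + z\<^sup>2) / 2) * (2 + y\<^sup>2) * (2 + z\<^sup>2)))
      = 2 * sqrt 2 * T * ((e * e) * d * z * den_B d T - 2 * e * (d * d) * y * den_A e T)
          / (den_A e T * den_B d T * sqrt (rad_P e d T))"
    unfolding Ay Bz sq using T pos by (simp add: field_simps power2_eq_square)
  also have "\<dots> = sqrt 2 * num_K e d T / (den_A e T * den_B d T * sqrt (rad_P e d T))"
    using T pos unfolding ee dd num_K_def y_def z_def by (simp add: field_simps)
  finally show ?thesis
    using DERIV_cmult[OF sa_H_deriv[OF dy dz], of "e * d"] by (simp add: y_def z_def)
qed

definition dPhi :: "real \<Rightarrow> real" where
  "dPhi T = (\<Sum>e\<in>{-1, 1}. \<Sum>d\<in>{-1, 1}.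
     sqrt 2 * num_K e d T / (den_A e T * den_B d T * sqrt (rad_P e d T)))"

lemma Phi_deriv: "0 < T \<Longrightarrow> (Phi has_real_derivative dPhi T) (at T)"
  unfolding Phi_def dPhi_def
  by (intro DERIV_sum sa_H_term_deriv) auto

lemma add_nonpos_of_sq_le:
  fixes x y :: real
  assumes "x < 0" "y\<^sup>2 \<le> x\<^sup>2"
  shows "x + y \<le> 0"
  using assms abs_le_square_iff[of y x] by linarith

lemma frac_pair_nonpos:
  fixes a b u v P Q :: real
  assumes "a < 0" "0 < u" "0 < v" "0 < P" "0 < Q" "b\<^sup>2 * u\<^sup>2 * P \<le> a\<^sup>2 * v\<^sup>2 * Q"
  shows "a / (u * sqrt P) + b / (v * sqrt Q) \<le> 0"
proof (rule add_nonpos_of_sq_le)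
  show "a / (u * sqrt P) < 0"
    using assms by (simp add: divide_neg_pos)
  have "b\<^sup>2 / (v\<^sup>2 * Q) \<le> a\<^sup>2 / (u\<^sup>2 * P)"
    using assms by (simp add: frac_le_eq divide_le_0_iff mult_ac)
  then show "(b / (v * sqrt Q))\<^sup>2 \<le> (a / (u * sqrt P))\<^sup>2"
    using assms by (simp add: power_divide power_mult_distrib)
qed

lemma amgm_sqrt:
  fixes k c P :: real
  assumes "0 \<le> P"
  shows "2 * k * c * sqrt P \<le> k\<^sup>2 * P + c\<^sup>2"
proof -
  have "0 \<le> (k * sqrt P - c)\<^sup>2" by simp
  then show ?thesis
    using assms by (simp add: power2_eq_square algebra_simps)
qed

lemma inverse_sqrt_bounds:
  fixes k c P :: real
  assumes "0 < k" "0 < c" "0 < P"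
  shows "2 * k * c / (k\<^sup>2 * P + c\<^sup>2) \<le> 1 / sqrt P"
    and "1 / sqrt P \<le> (k\<^sup>2 * P + c\<^sup>2) / (2 * k * c * P)"
proof -
  have amgm: "2 * k * c * sqrt P \<le> k\<^sup>2 * P + c\<^sup>2"
    using amgm_sqrt assms(3) by simp
  have R: "0 < k\<^sup>2 * P + c\<^sup>2"
    using assms by (simp add: add_pos_nonneg)
  show "2 * k * c / (k\<^sup>2 * P + c\<^sup>2) \<le> 1 / sqrt P"
    using amgm R assms by (simp add: divide_simps mult_ac)
  have "2 * k * c * P = 2 * k * c * sqrt P * sqrt P"
    using assms by simp
  also have "\<dots> \<le> (k\<^sup>2 * P + c\<^sup>2) * sqrt P"
    using amgm assms by (simp add: mult_right_mono)
  finally show "1 / sqrt P \<le> (k\<^sup>2 * P + c\<^sup>2) / (2 * k * c * P)"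
    using assms by (simp add: divide_simps mult_ac)
qed

lemma frac_sqrt_le_of_nonneg:
  fixes a u k c P :: real
  assumes "0 \<le> a" "0 < u" "0 < k" "0 < c" "0 < P"
  shows "a / (u * sqrt P) \<le> a * (k\<^sup>2 * P + c\<^sup>2) / (2 * k * c * u * P)"
proof -
  have "a / u * (1 / sqrt P) \<le> a / u * ((k\<^sup>2 * P + c\<^sup>2) / (2 * k * c * P))"
    by (rule mult_left_mono[OF inverse_sqrt_bounds(2)[OF assms(3-5)]]) (use assms in simp)
  then show ?thesis by (simp add: mult_ac)
qed

lemma frac_sqrt_le_of_nonpos:
  fixes a u k c P :: real
  assumes "a \<le> 0" "0 < u" "0 < k" "0 < c" "0 < P"
  shows "a / (u * sqrt P) \<le> 2 * k * c * a / (u * (k\<^sup>2 * P + c\<^sup>2))"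
proof -
  have "a / u * (1 / sqrt P) \<le> a / u * (2 * k * c / (k\<^sup>2 * P + c\<^sup>2))"
    using inverse_sqrt_bounds(1)[OF assms(3-5)] assms(1,2)
    by (intro mult_left_mono_neg) (simp_all add: divide_nonpos_pos)
  then show ?thesis by (simp add: mult_ac)
qed

lemma conjugate_pair_le:
  fixes a b u v P Q k cP cQ :: real
  assumes "a < 0" "0 < b" "0 < u" "0 < v" "0 < P" "0 < Q" "0 < k" "0 < cP" "0 < cQ"
    and M: "0 \<le> b\<^sup>2 * u\<^sup>2 * P - a\<^sup>2 * v\<^sup>2 * Q"
  defines "RP \<equiv> k\<^sup>2 * P + cP\<^sup>2" and "RQ \<equiv> k\<^sup>2 * Q + cQ\<^sup>2"
  shows "a / (u * sqrt P) + b / (v * sqrt Q)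
    \<le> (b\<^sup>2 * u\<^sup>2 * P - a\<^sup>2 * v\<^sup>2 * Q) * RP * RQ
       / (2 * k * u * v * P * Q * (b * u * cQ * RP - a * v * cP * RQ))"
proof -
  define x y where "x = a / (u * sqrt P)" and "y = b / (v * sqrt Q)"
  have R: "0 < RP" "0 < RQ"
    using assms by (simp_all add: add_pos_nonneg)
  have "2 * k * (b * u * cQ * RP - a * v * cP * RQ) / (u * v * RP * RQ)
      = b / v * (2 * k * cQ / RQ) + (- a) / u * (2 * k * cP / RP)"
    using assms(1-9) R by (simp add: field_simps)
  also have "\<dots> \<le> b / v * (1 / sqrt Q) + (- a) / u * (1 / sqrt P)"
    using inverse_sqrt_bounds(1)[of k cP P] inverse_sqrt_bounds(1)[of k cQ Q] assms
    unfolding RP_def RQ_def by (intro add_mono mult_left_mono) (simp_all add: divide_neg_pos less_imp_le)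
  also have "\<dots> = y - x"
    by (simp add: x_def y_def)
  finally have diff: "2 * k * (b * u * cQ * RP - a * v * cP * RQ) / (u * v * RP * RQ) \<le> y - x" .
  have D: "0 < b * u * cQ * RP - a * v * cP * RQ"
    using assms(1-9) R by (smt (verit) mult_pos_pos mult_neg_pos)
  have lower_pos: "0 < 2 * k * (b * u * cQ * RP - a * v * cP * RQ) / (u * v * RP * RQ)"
    using D assms(1-9) R by simp
  with diff have "y - x \<noteq> 0" by linarith
  then have "x + y = (y\<^sup>2 - x\<^sup>2) / (y - x)"
    by (simp add: power2_eq_square field_simps)
  also have "y\<^sup>2 - x\<^sup>2 = (b\<^sup>2 * u\<^sup>2 * P - a\<^sup>2 * v\<^sup>2 * Q) / (u\<^sup>2 * v\<^sup>2 * P * Q)"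
    using assms by (simp add: x_def y_def power_divide power_mult_distrib field_simps)
  also have "\<dots> / (y - x) \<le> (b\<^sup>2 * u\<^sup>2 * P - a\<^sup>2 * v\<^sup>2 * Q) / (u\<^sup>2 * v\<^sup>2 * P * Q)
      / (2 * k * (b * u * cQ * RP - a * v * cP * RQ) / (u * v * RP * RQ))"
    using diff lower_pos M assms(1-9) by (intro divide_left_mono mult_pos_pos) simp_all
  also have "\<dots> = (b\<^sup>2 * u\<^sup>2 * P - a\<^sup>2 * v\<^sup>2 * Q) * RP * RQ
       / (2 * k * u * v * P * Q * (b * u * cQ * RP - a * v * cP * RQ))"
    using assms(1-9) R D by (simp add: field_simps power2_eq_square)
  finally show ?thesis by (simp add: x_def y_def)
qed

lemma add3_nonpos_of_bounds:
  fixes x y z \<alpha> \<beta> \<gamma> a b c :: real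
  assumes "0 < a" "0 < b" "0 < c" "x \<le> \<alpha> / a" "y \<le> \<beta> / b" "z \<le> \<gamma> / c"
    and "\<alpha> * b * c + \<beta> * a * c + \<gamma> * a * b \<le> 0"
  shows "x + y + z \<le> 0"
proof -
  have "\<alpha> / a + \<beta> / b + \<gamma> / c = (\<alpha> * b * c + \<beta> * a * c + \<gamma> * a * b) / (a * b * c)"
    using assms by (simp add: field_simps)
  also have "\<dots> \<le> 0"
    using assms by (simp add: divide_nonpos_pos)
  finally show ?thesis using assms by linarith
qed

section \<open>Sign of the derivative\<close>

definition LA :: "int \<Rightarrow> int list" where "LA e = [3, 2 * e, 1]"
definition LB :: "int \<Rightarrow> int list" where "LB d = [1, 4 * d, 12]"
definition LP :: "int \<Rightarrow> int \<Rightarrow> int list" where "LP e d = [1, 4 * d, 16, 8 * e, 4]"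
definition Lg :: "int \<Rightarrow> int \<Rightarrow> int list" where "Lg e d = [- (e * d), 0, 2]"
definition Lq :: "int \<Rightarrow> int \<Rightarrow> int list" where "Lq e d = [- (e * d), 12 * d - 6 * e, -2]"

(* LC e d approximates 20 sqrt (P e d). The AM-GM bounds hold for any positive approximant;
   these are chosen so that the certified polynomial inequalities below are true. *)
definition LC :: "int \<Rightarrow> int \<Rightarrow> int list" where
  "LC e d = (if e = 1 then if d = 1 then [25, 49, 40] else [8, 51, 40]
             else if d = 1 then [65, -27, 40] else [41, -24, 40])"

definition LR :: "int \<Rightarrow> int \<Rightarrow> int list" where
  "LR e d = [400] \<otimes> LP e d \<oplus> LC e d \<otimes> LC e d"

definition Ldisc :: "int \<Rightarrow> int \<Rightarrow> int list" where
  "Ldisc e d = Lq e d \<otimes> Lq e d \<otimes> LA (-e) \<otimes> LA (-e) \<otimes> LB (-d) \<otimes> LB (-d) \<otimes> LP (-e) (-d)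
     \<oplus> [-1] \<otimes> Lq (-e) (-d) \<otimes> Lq (-e) (-d) \<otimes> LA e \<otimes> LA e \<otimes> LB d \<otimes> LB d \<otimes> LP e d"

definition LN :: "int list" where
  "LN = [0, -456, 0, 19336, 0, 1258336, 0, 7382976, 0, 5033344, 0, 309376, 0, -29184]"

definition LD :: "int list" where
  "LD = Lq (-1) 1 \<otimes> LA 1 \<otimes> LB (-1) \<otimes> LC (-1) 1 \<otimes> LR 1 (-1)
      \<oplus> [-1] \<otimes> Lq 1 (-1) \<otimes> LA (-1) \<otimes> LB 1 \<otimes> LC 1 (-1) \<otimes> LR (-1) 1"

(* Numerators left after clearing the positive denominators in add3_nonpos_of_bounds, in the
   cases where ipoly (Lq 1 1) T is nonnegative resp. negative. *)
definition LE_qpos :: "int list" where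
  "LE_qpos =
     Lq 1 1 \<otimes> LR 1 1 \<otimes> LA (-1) \<otimes> LB (-1) \<otimes> LR (-1) (-1) \<otimes> LP 1 (-1) \<otimes> LP (-1) 1 \<otimes> LD
   \<oplus> [1600] \<otimes> Lq (-1) (-1) \<otimes> LC (-1) (-1) \<otimes> LC 1 1 \<otimes> LA 1 \<otimes> LB 1 \<otimes> LP 1 1 \<otimes> LP 1 (-1) \<otimes> LP (-1) 1 \<otimes> LD
   \<oplus> Lg 1 (-1) \<otimes> LN \<otimes> LR 1 (-1) \<otimes> LR (-1) 1 \<otimes> LC 1 1 \<otimes> LP 1 1 \<otimes> LR (-1) (-1)"

definition LE_qneg :: "int list" where
  "LE_qneg =
     [1600] \<otimes> Lq (-1) (-1) \<otimes> LC (-1) (-1) \<otimes> LA 1 \<otimes> LB 1 \<otimes> LP 1 (-1) \<otimes> LP (-1) 1 \<otimes> LD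
   \<oplus> Lg 1 (-1) \<otimes> LN \<otimes> LR 1 (-1) \<otimes> LR (-1) 1 \<otimes> LR (-1) (-1)"

lemma ipoly_LA: "e \<in> {-1, 1} \<Longrightarrow> ipoly (LA e) T = den_A (of_int e) T"
  by (auto simp: LA_def den_A_def power2_eq_square algebra_simps)

lemma ipoly_LB: "d \<in> {-1, 1} \<Longrightarrow> ipoly (LB d) T = den_B (of_int d) T"
  by (auto simp: LB_def den_B_def power2_eq_square algebra_simps)

lemma ipoly_LP:
  "e \<in> {-1, 1} \<Longrightarrow> d \<in> {-1, 1} \<Longrightarrow> ipoly (LP e d) T = rad_P (of_int e) (of_int d) T"
  by (auto simp: LP_def rad_P_def den_A_def power2_eq_square algebra_simps)

lemma num_K_factor:
  "e \<in> {-1, 1} \<Longrightarrow> d \<in> {-1, 1} \<Longrightarrow>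
     num_K (of_int e) (of_int d) T = ipoly (Lg e d) T * ipoly (Lq e d) T"
  by (auto simp: Lg_def Lq_def num_K_def den_A_def den_B_def power2_eq_square algebra_simps)

lemma Ldisc_anti: "ipoly (Ldisc 1 (-1)) T = - (ipoly (Lg 1 1) T * ipoly LN T)"
proof -
  have "list_all ((=) 0) (Ldisc 1 (-1) \<oplus> Lg 1 1 \<otimes> LN)"
    by code_simp
  from ipoly_eq_zero[OF this, of T] show ?thesis
    by (simp add: eq_neg_iff_add_eq_0)
qed

lemma certified_signs:
  assumes "7/10 \<le> T"
  shows "ipoly (Lq 1 (-1)) T < 0" "ipoly (Lq (-1) (-1)) T < 0" "ipoly LE_qpos T < 0"
    and "0 < ipoly (LC 1 1) T" "0 < ipoly (LC (-1) (-1)) T"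
    and "0 < ipoly (LC 1 (-1)) T" "0 < ipoly (LC (-1) 1) T"
    and "0 < ipoly (Ldisc (-1) (-1)) T"
proof -
  have T: "of_int 7 / of_int 10 \<le> T" using assms by simp
  note pos = ipoly_pos_beyond[where m = 10, OF _ _ T, simplified]
    and neg = ipoly_neg_beyond[where m = 10, OF _ _ T, simplified]
  show "ipoly (Lq 1 (-1)) T < 0" "ipoly (Lq (-1) (-1)) T < 0" "ipoly LE_qpos T < 0"
    by (rule neg, code_simp)+
  show "0 < ipoly (LC 1 1) T" "0 < ipoly (LC (-1) (-1)) T"
    "0 < ipoly (LC 1 (-1)) T" "0 < ipoly (LC (-1) 1) T" "0 < ipoly (Ldisc (-1) (-1)) T"
    by (rule pos, code_simp)+
qed

lemma LN_neg_beyond: "46/10 \<le> T \<Longrightarrow> ipoly LN T < 0"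
  by (rule ipoly_neg_beyond[where m = 10 and n = 46]) (code_simp, simp_all)

lemma LE_qneg_neg_beyond: "28/10 \<le> T \<Longrightarrow> ipoly LE_qneg T < 0"
  by (rule ipoly_neg_beyond[where m = 10 and n = 28]) (code_simp, simp_all)

context
  fixes T :: real
begin

abbreviation A :: "int \<Rightarrow> real" where "A e \<equiv> ipoly (LA e) T"
abbreviation B :: "int \<Rightarrow> real" where "B d \<equiv> ipoly (LB d) T"
abbreviation P :: "int \<Rightarrow> int \<Rightarrow> real" where "P e d \<equiv> ipoly (LP e d) T"
abbreviation g :: "int \<Rightarrow> int \<Rightarrow> real" where "g e d \<equiv> ipoly (Lg e d) T"
abbreviation q :: "int \<Rightarrow> int \<Rightarrow> real" where "q e d \<equiv> ipoly (Lq e d) T"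
abbreviation C :: "int \<Rightarrow> int \<Rightarrow> real" where "C e d \<equiv> ipoly (LC e d) T"
abbreviation R :: "int \<Rightarrow> int \<Rightarrow> real" where "R e d \<equiv> ipoly (LR e d) T"
abbreviation N :: real where "N \<equiv> ipoly LN T"
abbreviation D :: real where "D \<equiv> ipoly LD T"

abbreviation rho :: "int \<Rightarrow> int \<Rightarrow> real" where
  "rho e d \<equiv> q e d / (A e * B d * sqrt (P e d))"

abbreviation anti_den :: real where
  "anti_den \<equiv> 40 * (A 1 * B (-1)) * (A (-1) * B 1) * P 1 (-1) * P (-1) 1 * D"

abbreviation anti_bound :: real where
  "anti_bound \<equiv> N * R 1 (-1) * R (-1) 1 / anti_den"

lemma dPhi_eq: "dPhi T = sqrt 2 * (g 1 1 * (rho 1 1 + rho (-1) (-1)) + g 1 (-1) * (rho 1 (-1) + rho (-1) 1))"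
proof -
  have "sqrt 2 * num_K (of_int e) (of_int d) T
          / (den_A (of_int e) T * den_B (of_int d) T * sqrt (rad_P (of_int e) (of_int d) T))
      = sqrt 2 * g e d * rho e d" if "e \<in> {-1, 1}" "d \<in> {-1, 1}" for e d
    using that by (simp add: num_K_factor ipoly_LA ipoly_LB ipoly_LP)
  from this[of 1 1] this[of 1 "-1"] this[of "-1" 1] this[of "-1" "-1"] show ?thesis
    by (simp add: dPhi_def Lg_def algebra_simps)
qed

lemma den_pos:
  assumes "0 < T" "e \<in> {-1, 1}" "d \<in> {-1, 1}"
  shows "0 < A e" "0 < B d" "0 < P e d" "0 < R e d"
proof -
  show "0 < A e" "0 < B d" "0 < P e d"
    using assms by (simp_all only: ipoly_LA ipoly_LB ipoly_LP den_A_pos den_B_pos rad_P_pos)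
  then show "0 < R e d"
    by (simp add: LR_def add_pos_nonneg)
qed

lemma rho_pair_nonpos:
  assumes "0 < T" "e \<in> {-1, 1}" "d \<in> {-1, 1}" "q e d < 0" "0 \<le> ipoly (Ldisc e d) T"
  shows "rho e d + rho (-e) (-d) \<le> 0"
proof -
  have "-e \<in> {-1, 1}" "-d \<in> {-1, 1}"
    using assms(2,3) by auto
  note pos = den_pos[OF assms(1-3)] den_pos[OF assms(1) this]
  show ?thesis
    by (rule frac_pair_nonpos) (use assms(4,5) pos in \<open>simp_all add: Ldisc_def power2_eq_square mult_ac\<close>)
qed

lemma inv_sqrt2_le_imp:
  assumes "1 / sqrt 2 \<le> T"
  shows "7/10 \<le> T" "0 \<le> g 1 1"
proof -
  have "sqrt 2 < (10/7::real)"
    by (rule real_less_lsqrt) (simp_all add: power_divide)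
  then have "7/10 < 1 / sqrt (2::real)"
    by (simp add: field_simps)
  then show "7/10 \<le> T"
    using assms by linarith
  have "(1 / sqrt 2)\<^sup>2 \<le> T\<^sup>2"
    using assms by (intro power_mono) simp_all
  then show "0 \<le> g 1 1"
    by (simp add: Lg_def power_divide power2_eq_square)
qed

lemma rho_anti_pair_le:
  assumes "1 / sqrt 2 \<le> T" "0 \<le> N" "0 < q (-1) 1"
  shows "rho 1 (-1) + rho (-1) 1 \<le> g 1 1 * anti_bound"
proof -
  note T = inv_sqrt2_le_imp[OF assms(1)]
  then have "0 < T" by simp
  note pos = den_pos[OF this, of 1 "-1"] den_pos[OF this, of "-1" 1] and sgn = certified_signs[OF T(1)]
  have M: "(q (-1) 1)\<^sup>2 * (A 1 * B (-1))\<^sup>2 * P 1 (-1) - (q 1 (-1))\<^sup>2 * (A (-1) * B 1)\<^sup>2 * P (-1) 1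
      = g 1 1 * N"
    using Ldisc_anti[of T] by (simp add: Ldisc_def power2_eq_square algebra_simps)
  show ?thesis
    using conjugate_pair_le[of "q 1 (-1)" "q (-1) 1" "A 1 * B (-1)" "A (-1) * B 1"
        "P 1 (-1)" "P (-1) 1" 20 "C 1 (-1)" "C (-1) 1"] assms(2,3) T(2) pos sgn
    unfolding M by (simp add: LR_def LD_def power2_eq_square mult_ac)
qed

lemma anti_den_pos:
  assumes "7/10 \<le> T" "0 < q (-1) 1"
  shows "0 < anti_den"
proof -
  have "0 < T" using assms(1) by simp
  note pos = den_pos[OF this, of 1 "-1"] den_pos[OF this, of "-1" 1] and sgn = certified_signs[OF assms(1)]
  have "0 < q (-1) 1 * A 1 * B (-1) * C (-1) 1 * R 1 (-1)"
    using assms(2) pos sgn by simp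
  moreover have "q 1 (-1) * A (-1) * B 1 * C 1 (-1) * R (-1) 1 < 0"
    using pos sgn by (simp add: mult_neg_pos)
  ultimately have "0 < D"
    by (simp add: LD_def)
  then show ?thesis
    using pos by simp
qed

lemma rho_mm_le:
  assumes "7/10 \<le> T"
  shows "rho (-1) (-1) \<le> 40 * C (-1) (-1) * q (-1) (-1) / (A (-1) * B (-1) * R (-1) (-1))"
proof -
  have "0 < T" using assms by simp
  note pos = den_pos[OF this, of "-1" "-1"] and sgn = certified_signs[OF assms]
  have "rho (-1) (-1) \<le> 2 * 20 * C (-1) (-1) * q (-1) (-1)
      / (A (-1) * B (-1) * (20\<^sup>2 * P (-1) (-1) + (C (-1) (-1))\<^sup>2))"
    using pos sgn by (intro frac_sqrt_le_of_nonpos) simp_all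
  then show ?thesis
    by (simp add: LR_def power2_eq_square)
qed

lemma diag_plus_anti_bound_nonpos_of_q_nonneg:
  assumes T: "7/10 \<le> T" and "0 < q (-1) 1" "0 \<le> q 1 1"
  shows "rho 1 1 + rho (-1) (-1) + g 1 (-1) * anti_bound \<le> 0"
proof -
  have "0 < T" using T by simp
  note pos = den_pos[OF this, of 1 1] den_pos[OF this, of "-1" "-1"] and sgn = certified_signs[OF T]
  have "rho 1 1 \<le> q 1 1 * (20\<^sup>2 * P 1 1 + (C 1 1)\<^sup>2) / (2 * 20 * C 1 1 * (A 1 * B 1) * P 1 1)"
    using assms(3) pos sgn by (intro frac_sqrt_le_of_nonneg) simp_all
  then have x: "rho 1 1 \<le> q 1 1 * R 1 1 / (40 * C 1 1 * (A 1 * B 1) * P 1 1)"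
    by (simp add: LR_def power2_eq_square)
  show ?thesis
  proof (rule add3_nonpos_of_bounds[OF _ _ _ x rho_mm_le[OF T]])
    show "g 1 (-1) * anti_bound \<le> g 1 (-1) * N * R 1 (-1) * R (-1) 1 / anti_den"
      by simp
    have "q 1 1 * R 1 1 * (A (-1) * B (-1) * R (-1) (-1)) * anti_den
        + 40 * C (-1) (-1) * q (-1) (-1) * (40 * C 1 1 * (A 1 * B 1) * P 1 1) * anti_den
        + g 1 (-1) * N * R 1 (-1) * R (-1) 1 * (40 * C 1 1 * (A 1 * B 1) * P 1 1) * (A (-1) * B (-1) * R (-1) (-1))
        = 40 * (A 1 * A (-1) * B 1 * B (-1)) * ipoly LE_qpos T" (is "?cleared = _")
      by (simp add: LE_qpos_def algebra_simps)
    also have "\<dots> \<le> 0"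
      using pos sgn by (simp add: mult_pos_neg less_imp_le)
    finally show "?cleared \<le> 0" .
  qed (use pos sgn anti_den_pos[OF assms(1,2)] in simp_all)
qed

lemma diag_plus_anti_bound_nonpos_of_q_neg:
  assumes T: "7/10 \<le> T" and "0 < q (-1) 1" "q 1 1 < 0"
  shows "rho 1 1 + rho (-1) (-1) + g 1 (-1) * anti_bound \<le> 0"
proof -
  have "0 < T" using T by simp
  note pos = den_pos[OF this, of 1 1] den_pos[OF this, of "-1" "-1"]
  have "28/10 \<le> T"
  proof (rule ccontr)
    assume small: "\<not> 28/10 \<le> T"
    then have "0 \<le> (T - 7/10) * (28/10 - T)"
      using T by simp
    then show False
      using assms(3) small by (simp add: Lq_def algebra_simps)
  qed
  have x: "rho 1 1 \<le> 0 / 1"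
    using assms(3) pos by (simp add: divide_nonpos_pos)
  show ?thesis
  proof (rule add3_nonpos_of_bounds[OF _ _ _ x rho_mm_le[OF T]])
    show "g 1 (-1) * anti_bound \<le> g 1 (-1) * N * R 1 (-1) * R (-1) 1 / anti_den"
      by simp
    have "0 * (A (-1) * B (-1) * R (-1) (-1)) * anti_den
        + 40 * C (-1) (-1) * q (-1) (-1) * 1 * anti_den
        + g 1 (-1) * N * R 1 (-1) * R (-1) 1 * 1 * (A (-1) * B (-1) * R (-1) (-1))
        = A (-1) * B (-1) * ipoly LE_qneg T" (is "?cleared = _")
      by (simp add: LE_qneg_def algebra_simps)
    also have "\<dots> \<le> 0"
      using pos LE_qneg_neg_beyond[OF \<open>28/10 \<le> T\<close>] by (simp add: mult_pos_neg less_imp_le)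
    finally show "?cleared \<le> 0" .
  qed (use pos anti_den_pos[OF assms(1,2)] in simp_all)
qed

lemma dPhi_nonpos:
  assumes "1 / sqrt 2 \<le> T"
  shows "dPhi T \<le> 0"
proof -
  note T = inv_sqrt2_le_imp[OF assms]
  then have T0: "0 < T" by simp
  note sgn = certified_signs[OF T(1)]
  have g: "0 < g 1 (-1)"
    by (simp add: Lg_def add_pos_nonneg)
  have diag: "rho 1 1 + rho (-1) (-1) \<le> 0"
    using rho_pair_nonpos[OF T0, of "-1" "-1"] sgn by simp
  have "g 1 1 * (rho 1 1 + rho (-1) (-1)) + g 1 (-1) * (rho 1 (-1) + rho (-1) 1) \<le> 0"
  proof (cases "N < 0")
    case True
    then have "0 \<le> ipoly (Ldisc 1 (-1)) T"
      using T(2) by (simp add: Ldisc_anti mult_nonneg_nonpos less_imp_le)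
    then have "rho 1 (-1) + rho (-1) 1 \<le> 0"
      using rho_pair_nonpos[OF T0, of 1 "-1"] sgn by simp
    then show ?thesis
      using diag T(2) g by (simp add: add_nonpos_nonpos mult_nonneg_nonpos)
  next
    case False
    then have "T < 46/10"
      using LN_neg_beyond by force
    then have qmp: "0 < q (-1) 1"
      using T0 by (simp add: Lq_def add_pos_nonneg)
    have "g 1 (-1) * (rho 1 (-1) + rho (-1) 1) \<le> g 1 (-1) * (g 1 1 * anti_bound)"
      using rho_anti_pair_le[OF assms _ qmp] False g by (intro mult_left_mono) simp_all
    moreover have "g 1 1 * (rho 1 1 + rho (-1) (-1) + g 1 (-1) * anti_bound) \<le> 0"
      using T(2) qmp diag_plus_anti_bound_nonpos_of_q_nonneg[OF T(1) qmp]
        diag_plus_anti_bound_nonpos_of_q_neg[OF T(1) qmp]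
      by (cases "0 \<le> q 1 1") (simp_all add: mult_nonneg_nonpos)
    ultimately show ?thesis
      by (simp add: algebra_simps)
  qed
  then show ?thesis
    by (simp add: dPhi_eq mult_nonneg_nonpos)
qed

end

lemma Phi_antitone:
  assumes "1 / sqrt 2 \<le> T"
  shows "Phi T \<le> Phi (1 / sqrt 2)"
proof (rule DERIV_nonpos_imp_nonincreasing[OF assms])
  fix t :: real
  assume "1 / sqrt 2 \<le> t"
  moreover have "0 < 1 / sqrt (2::real)" by simp
  ultimately show "\<exists>y. (Phi has_real_derivative y) (at t) \<and> y \<le> 0"
    using Phi_deriv dPhi_nonpos by (meson less_le_trans)
qed

theorem mainTheorem3:
  shows "\<forall>l::real. l \<ge> 1 \<longrightarrow> Omega l \<le> Omega 1"
proof (intro allI impI)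
  fix l :: real
  assume "l \<ge> 1"
  then have "1 / sqrt 2 \<le> l / sqrt 2"
    by (simp add: divide_right_mono)
  then have "Phi (l / sqrt 2) \<le> Phi (1 / sqrt 2)"
    by (rule Phi_antitone)
  with \<open>l \<ge> 1\<close> show "Omega l \<le> Omega 1"
    using Omega_eq_Phi[of l] Omega_eq_Phi[of 1] by simp
qed

end
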